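(* Let $(\varphi_{s,t})$ be an evolution family of order $d\in[1,+\infty]$. Assume that for all $t\ge0$ the function $f_t:\mathbb D\to\mathbb C$ is univalent (holomorphic) and $f_t\circ\varphi_{s,t}=f_s$ for all $0\le s\le t<+\infty$. Then $(f_t)$ is a Loewner chain of order $d$.
   Context: $\mathbb D$ is the open unit disk. For $d\in[1,+\infty]$, an evolution family of order $d$ is a family $(\varphi_{s,t})_{0\le s\le t<+\infty}$ of holomorphic self-maps of $\mathbb D$ with $\varphi_{s,s}=\mathrm{id}_{\mathbb D}$, $\varphi_{s,t}=\varphi_{u,t}\circ\varphi_{s,u}$ for $0\le s\le u\le t$, and such that for every $z\in\mathbb D$, $T>0$ there is a non-negative $k_{z,T}\in L^d([0,T])$ with $|\varphi_{s,u}(z)-\varphi_{s,t}(z)|\le\int_u^tk_{z,T}$ for all $0\le s\le u\le t\le T$. A Loewner chain of order $d$ is a family $(f_t)_{t\ge0}$ of holomorphic maps $f_t:\mathbb D\to\mathbb C$ such that each $f_t$ is univalent, $f_s(\mathbb D)\subset f_t(\mathbb D)$ for all $0\le s<t$, and for every compact $K\subset\mathbb D$ and $T>0$ there is a non-negative $k_{K,T}\in L^d([0,T])$ with $|f_s(z)-f_t(z)|\le\int_s^tk_{K,T}$ for all $z\in K$, $0\le s\le t\le T$. *)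

theory Defs
  imports "HOL-Analysis.Analysis"
begin

definition Lp_on :: "ereal \<Rightarrow> real \<Rightarrow> (real \<Rightarrow> real) \<Rightarrow> bool" where
  "Lp_on d T k \<longleftrightarrow>
     k \<in> borel_measurable (lebesgue_on {0..T}) \<and>
     (if d = \<infinity> then (\<exists>C. AE x in lebesgue_on {0..T}. \<bar>k x\<bar> \<le> C)
      else integrable (lebesgue_on {0..T}) (\<lambda>x. \<bar>k x\<bar> powr real_of_ereal d))"

definition evolution_family ::
  "ereal \<Rightarrow> (real \<Rightarrow> real \<Rightarrow> complex \<Rightarrow> complex) \<Rightarrow> bool" where
  "evolution_family d \<phi> \<longleftrightarrow>
     (\<forall>s t. 0 \<le> s \<longrightarrow> s \<le> t \<longrightarrow>
        \<phi> s t holomorphic_on ball 0 1 \<and> \<phi> s t ` ball 0 1 \<subseteq> ball 0 1) \<and>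
     (\<forall>s\<ge>0. \<forall>z\<in>ball 0 1. \<phi> s s z = z) \<and>
     (\<forall>s u t. 0 \<le> s \<longrightarrow> s \<le> u \<longrightarrow> u \<le> t \<longrightarrow>
        (\<forall>z\<in>ball 0 1. \<phi> s t z = \<phi> u t (\<phi> s u z))) \<and>
     (\<forall>z\<in>ball 0 1. \<forall>T>0. \<exists>k. (\<forall>x. 0 \<le> k x) \<and> Lp_on d T k \<and>
        (\<forall>s u t. 0 \<le> s \<longrightarrow> s \<le> u \<longrightarrow> u \<le> t \<longrightarrow> t \<le> T \<longrightarrow>
           cmod (\<phi> s u z - \<phi> s t z) \<le> integral {u..t} k))"

definition loewner_chain ::
  "ereal \<Rightarrow> (real \<Rightarrow> complex \<Rightarrow> complex) \<Rightarrow> bool" where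
  "loewner_chain d f \<longleftrightarrow>
     (\<forall>t\<ge>0. f t holomorphic_on ball 0 1 \<and> inj_on (f t) (ball 0 1)) \<and>
     (\<forall>s t. 0 \<le> s \<longrightarrow> s < t \<longrightarrow> f s ` ball 0 1 \<subseteq> f t ` ball 0 1) \<and>
     (\<forall>K T. compact K \<longrightarrow> K \<subseteq> ball 0 1 \<longrightarrow> T > 0 \<longrightarrow>
        (\<exists>k. (\<forall>x. 0 \<le> k x) \<and> Lp_on d T k \<and>
          (\<forall>z\<in>K. \<forall>s t. 0 \<le> s \<longrightarrow> s \<le> t \<longrightarrow> t \<le> T \<longrightarrow>
             cmod (f s z - f t z) \<le> integral {s..t} k)))"

end

theory Submission
  imports Defs "HOL-Complex_Analysis.Complex_Analysis"
begin

text \<open>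
  Since \<open>f\<^sub>s = f\<^sub>t \<circ> \<phi>\<^sub>s\<^sub>,\<^sub>t\<close>, we have
  \<open>|f\<^sub>s z - f\<^sub>t z| = |f\<^sub>t (\<phi>\<^sub>s\<^sub>,\<^sub>t z) - f\<^sub>t z|\<close>, so it suffices to bound a Lipschitz
  constant of \<open>f\<^sub>t\<close> on a disk \<open>|z| \<le> \<rho> < 1\<close> uniformly in \<open>t \<le> T\<close>, and to bound
  \<open>|\<phi>\<^sub>s\<^sub>,\<^sub>t z - z|\<close> by an \<open>L\<^sup>d\<close> kernel. Both come from the Schwarz--Pick lemma.
  The Lipschitz bound follows from \<open>f\<^sub>t = f\<^sub>T \<circ> \<phi>\<^sub>t\<^sub>,\<^sub>T\<close> once the maps \<open>\<phi>\<^sub>s\<^sub>,\<^sub>t\<close>,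
  \<open>s \<le> t \<le> T\<close>, send a compact disk into a fixed compact disk; this holds because on short time
  intervals \<open>|\<phi>\<^sub>s\<^sub>,\<^sub>t(0)| \<le> 1/2\<close>, and hyperbolic radii grow by a bounded amount per interval.
  The displacement bound holds because a self-map of the disk moving \<open>0\<close> and \<open>1/2\<close> only slightly
  is uniformly close to the identity on compacta, and the displacements of \<open>0\<close> and \<open>1/2\<close> are
  controlled by the kernels in the definition of an evolution family.
\<close>

text \<open>\<open>tanh_add x y = tanh (artanh x + artanh y)\<close>: adding hyperbolic radii of disks about \<open>0\<close>.\<close>

definition tanh_add :: "real \<Rightarrow> real \<Rightarrow> real" where
  "tanh_add x y = (x + y) / (1 + x * y)"

lemma tanh_add_commute: "tanh_add x y = tanh_add y x"
  by (simp add: tanh_add_def add.commute mult.commute)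

lemma tanh_add_nonneg: "0 \<le> x \<Longrightarrow> 0 \<le> y \<Longrightarrow> 0 \<le> tanh_add x y"
  by (simp add: tanh_add_def)

lemma tanh_add_mono:
  assumes "0 \<le> x" "x \<le> x'" "0 \<le> c" "c < 1"
  shows "tanh_add x c \<le> tanh_add x' c"
proof -
  have "(x' + c) * (1 + x * c) - (x + c) * (1 + x' * c) = (x' - x) * (1 - c * c)"
    by (simp add: algebra_simps)
  moreover have "(x' - x) * (1 - c * c) \<ge> 0"
    using assms by (intro mult_nonneg_nonneg) (auto simp: mult_le_one)
  moreover have "1 + x * c > 0" "1 + x' * c > 0"
    using assms by (auto intro: add_pos_nonneg)
  ultimately show ?thesis
    by (simp add: tanh_add_def divide_simps)
qed

lemma tanh_add_less_1:
  assumes "0 \<le> x" "x < 1" "0 \<le> y" "y < 1"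
  shows "tanh_add x y < 1"
proof -
  have "(1 + x * y) - (x + y) = (1 - x) * (1 - y)"
    by (simp add: algebra_simps)
  moreover have "(1 - x) * (1 - y) > 0"
    using assms by simp
  moreover have "1 + x * y > 0"
    using assms by (auto intro: add_pos_nonneg)
  ultimately show ?thesis
    by (simp add: tanh_add_def)
qed

lemma Moebius_function_denom_nonzero:
  "norm a < 1 \<Longrightarrow> norm z < 1 \<Longrightarrow> 1 - cnj a * z \<noteq> 0"
  by (metis complex_mod_cnj less_irrefl mult.commute mult_1 norm_mult_less norm_one right_minus_eq)

lemma Moebius_function_inverse:
  "norm a < 1 \<Longrightarrow> norm z < 1 \<Longrightarrow> Moebius_function 0 (-a) (Moebius_function 0 a z) = z"
  by (rule Moebius_function_compose) auto

lemma Moebius_function_self_map: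
  "norm a < 1 \<Longrightarrow> Moebius_function 0 a ` ball 0 1 \<subseteq> ball 0 1"
  using Moebius_function_norm_lt_1 by auto

lemma norm_diff_eq_Moebius_function:
  "1 - cnj a * z \<noteq> 0 \<Longrightarrow> norm (z - a) = norm (Moebius_function 0 a z) * norm (1 - cnj a * z)"
  by (simp add: Moebius_function_simple norm_divide)

lemma one_minus_norm_Moebius_function_sq:
  assumes "norm a < 1" "norm z < 1"
  shows "1 - norm (Moebius_function 0 a z) ^ 2 =
           (1 - norm a ^ 2) * (1 - norm z ^ 2) / norm (1 - cnj a * z) ^ 2"
proof -
  have "1 - cnj a * z \<noteq> 0"
    using Moebius_function_denom_nonzero assms by blast
  then show ?thesis
    apply (cases a, cases z)
    apply (simp add: Moebius_function_simple divide_simps norm_divide norm_mult)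
    apply (simp add: complex_norm complex_diff complex_mult one_complex.code complex_cnj)
    apply (auto simp: algebra_simps power2_eq_square)
    done
qed

lemma norm_Moebius_function_le:
  assumes a: "norm a < 1" and z: "norm z < 1"
  shows "norm (Moebius_function 0 a z) \<le> tanh_add (norm z) (norm a)"
proof -
  define D where "D = norm (1 - cnj a * z)"
  define E where "E = 1 + norm z * norm a"
  define P where "P = (1 - norm a ^ 2) * (1 - norm z ^ 2)"
  have "D > 0"
    using Moebius_function_denom_nonzero[OF a z] by (simp add: D_def)
  moreover have "D \<le> E"
    using norm_triangle_ineq4[of 1 "cnj a * z"] by (simp add: D_def E_def norm_mult mult.commute)
  ultimately have "D ^ 2 \<le> E ^ 2" "0 < E ^ 2 * D ^ 2"
    by (auto intro: power_mono)
  moreover have "0 \<le> P"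
    using a z by (simp add: P_def abs_square_less_1 less_imp_le)
  ultimately have "P / E ^ 2 \<le> P / D ^ 2"
    by (intro divide_left_mono)
  also have "\<dots> = 1 - norm (Moebius_function 0 a z) ^ 2"
    using one_minus_norm_Moebius_function_sq[OF a z] by (simp add: D_def P_def)
  finally have "norm (Moebius_function 0 a z) ^ 2 \<le> (E ^ 2 - P) / E ^ 2"
    using \<open>0 < E ^ 2 * D ^ 2\<close> \<open>D \<le> E\<close> \<open>D > 0\<close> by (simp add: diff_divide_distrib)
  also have "E ^ 2 - P = (norm z + norm a) ^ 2"
    by (simp add: E_def P_def power2_eq_square algebra_simps)
  finally have "norm (Moebius_function 0 a z) ^ 2 \<le> ((norm z + norm a) / E) ^ 2"
    by (simp add: power_divide)
  then show ?thesis
    unfolding tanh_add_def E_def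
    by (rule power2_le_imp_le) (simp add: add_pos_nonneg)
qed

lemma norm_Moebius_function_minus_id_le:
  assumes a: "norm a \<le> 1/2" and w: "norm w < 1"
  shows "norm (Moebius_function 0 a w - w) \<le> 4 * norm a"
proof -
  have den: "norm (1 - cnj a * w) \<ge> 1/2"
  proof -
    have "norm (cnj a * w) \<le> 1/2"
      using a w mult_mono[of "norm a" "1/2" "norm w" 1] by (simp add: norm_mult)
    then show ?thesis
      using norm_triangle_ineq2[of 1 "cnj a * w"] by simp
  qed
  have num: "norm (cnj a * w ^ 2 - a) \<le> 2 * norm a"
  proof -
    have "norm (cnj a * w ^ 2) \<le> norm a"
      using w by (simp add: norm_mult norm_power mult_left_le power_le_one less_imp_le)
    then show ?thesis
      using norm_triangle_ineq4[of "cnj a * w ^ 2" a] by simp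
  qed
  have "1 - cnj a * w \<noteq> 0"
    using den by auto
  then have "Moebius_function 0 a w - w = (cnj a * w ^ 2 - a) / (1 - cnj a * w)"
    by (auto simp: Moebius_function_simple field_simps power2_eq_square)
  then have "norm (Moebius_function 0 a w - w) = norm (cnj a * w ^ 2 - a) / norm (1 - cnj a * w)"
    by (simp add: norm_divide)
  also have "\<dots> \<le> (2 * norm a) / (1/2)"
    by (intro frac_le num den) auto
  finally show ?thesis
    by simp
qed

lemma norm_self_map_less_1:
  "g ` ball 0 1 \<subseteq> ball 0 1 \<Longrightarrow> norm z < 1 \<Longrightarrow> norm (g z) < 1"
  by (auto simp: image_subset_iff)

lemma holomorphic_self_map_compose:
  assumes "f holomorphic_on ball 0 1" "f ` ball 0 1 \<subseteq> ball 0 1"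
    and "g holomorphic_on ball 0 1" "g ` ball 0 1 \<subseteq> ball 0 1"
  shows "(\<lambda>z. g (f z)) holomorphic_on ball 0 1" "(\<lambda>z. g (f z)) ` ball 0 1 \<subseteq> ball 0 1"
  using holomorphic_on_compose_gen[OF assms(1,3,2)] assms(2,4) by (auto simp: o_def)

lemma Schwarz_Pick:
  assumes g: "g holomorphic_on ball 0 1" "g ` ball 0 1 \<subseteq> ball 0 1"
    and x: "norm x < 1" and y: "norm y < 1"
  shows "norm (Moebius_function 0 (g y) (g x)) \<le> norm (Moebius_function 0 y x)"
proof -
  have gy: "norm (g y) < 1"
    using norm_self_map_less_1 g y by blast
  define h where "h w = Moebius_function 0 (g y) (g (Moebius_function 0 (-y) w))" for w
  have "(\<lambda>w. g (Moebius_function 0 (-y) w)) holomorphic_on ball 0 1"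
       "(\<lambda>w. g (Moebius_function 0 (-y) w)) ` ball 0 1 \<subseteq> ball 0 1"
    using holomorphic_self_map_compose[OF Moebius_function_holomorphic Moebius_function_self_map g] y
    by auto
  from holomorphic_self_map_compose[OF this Moebius_function_holomorphic Moebius_function_self_map]
  have hol: "h holomorphic_on ball 0 1" and self: "\<And>w. norm w < 1 \<Longrightarrow> norm (h w) < 1"
    using gy unfolding h_def[abs_def] by (auto simp: image_subset_iff)
  have "h 0 = 0"
    by (simp add: h_def Moebius_function_simple)
  have "norm (h (Moebius_function 0 y x)) \<le> norm (Moebius_function 0 y x)"
    using Schwarz_Lemma(1)[OF hol \<open>h 0 = 0\<close> self] Moebius_function_norm_lt_1 x y by blast
  then show ?thesis
    by (simp add: h_def Moebius_function_inverse x y)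
qed

lemma norm_self_map_le:
  assumes g: "g holomorphic_on ball 0 1" "g ` ball 0 1 \<subseteq> ball 0 1" and z: "norm z < 1"
  shows "norm (g z) \<le> tanh_add (norm z) (norm (g 0))"
proof -
  define c where "c = g 0"
  define m where "m = Moebius_function 0 c (g z)"
  have c: "norm c < 1" and gz: "norm (g z) < 1"
    using norm_self_map_less_1[OF g(2)] z by (auto simp: c_def)
  have "norm m \<le> norm z"
    using Schwarz_Pick[OF g z, of 0] by (simp add: m_def c_def Moebius_function_simple)
  moreover have m: "norm m < 1"
    unfolding m_def using Moebius_function_norm_lt_1 c gz by blast
  moreover have "g z = Moebius_function 0 (-c) m"
    using Moebius_function_inverse c gz m_def by auto
  ultimately have "norm (g z) \<le> tanh_add (norm m) (norm c)"
    using norm_Moebius_function_le[of "-c" m] c by simp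
  also have "\<dots> \<le> tanh_add (norm z) (norm c)"
    by (rule tanh_add_mono) (use \<open>norm m \<le> norm z\<close> c in auto)
  finally show ?thesis
    by (simp add: c_def)
qed

lemma self_map_lipschitz_on_cball:
  assumes g: "g holomorphic_on ball 0 1" "g ` ball 0 1 \<subseteq> ball 0 1"
    and x: "norm x \<le> \<rho>" and y: "norm y \<le> \<rho>" and \<rho>: "\<rho> < 1"
  shows "norm (g x - g y) \<le> 2 / (1 - \<rho>) * norm (x - y)"
proof -
  have x1: "norm x < 1" and y1: "norm y < 1" and gx: "norm (g x) < 1" and gy: "norm (g y) < 1"
    using norm_self_map_less_1[OF g(2)] x y \<rho> by auto
  have "norm (cnj y * x) \<le> \<rho>"
    using mult_mono[OF less_imp_le[OF y1] x] by (simp add: norm_mult)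
  then have den: "norm (1 - cnj y * x) \<ge> 1 - \<rho>"
    using norm_triangle_ineq2[of 1 "cnj y * x"] by simp
  have "norm (cnj (g y) * g x) \<le> 1"
    using gx gy by (simp add: norm_mult mult_le_one less_imp_le)
  then have den': "norm (1 - cnj (g y) * g x) \<le> 2"
    using norm_triangle_ineq4[of 1 "cnj (g y) * g x"] by simp
  have "norm (g x - g y) = norm (Moebius_function 0 (g y) (g x)) * norm (1 - cnj (g y) * g x)"
    using norm_diff_eq_Moebius_function Moebius_function_denom_nonzero gx gy by blast
  also have "\<dots> \<le> norm (Moebius_function 0 y x) * 2"
    by (rule mult_mono[OF Schwarz_Pick[OF g x1 y1] den']) auto
  also have "norm (Moebius_function 0 y x) = norm (x - y) / norm (1 - cnj y * x)"
    by (simp add: Moebius_function_simple norm_divide)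
  also have "\<dots> \<le> norm (x - y) / (1 - \<rho>)"
    by (rule divide_left_mono) (use den \<rho> in \<open>auto intro!: mult_pos_pos\<close>)
  finally show ?thesis
    by (simp add: mult.commute)
qed

lemma norm_1_minus_le_if_Moebius_le:
  assumes x: "norm x < 1" and y: "norm y < 1"
    and \<delta>: "norm (Moebius_function 0 y x) \<le> \<delta>" "\<delta> < 1"
  shows "norm (1 - x) \<le> (1 + \<delta>) / (1 - \<delta>) * norm (1 - y)"
proof -
  have "norm (1 - cnj y * x) = norm ((1 - cnj y) + cnj y * (1 - x))"
    by (simp add: algebra_simps)
  also have "\<dots> \<le> norm (1 - y) + norm (1 - x)"
  proof -
    have "norm (cnj y * (1 - x)) \<le> norm (1 - x)"
      using y by (simp add: norm_mult mult_left_le_one_le)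
    then show ?thesis
      using norm_triangle_ineq[of "1 - cnj y" "cnj y * (1 - x)"]
      by (simp add: complex_mod_cnj[of "1 - y", simplified])
  qed
  finally have den: "norm (1 - cnj y * x) \<le> norm (1 - y) + norm (1 - x)" .
  have "\<delta> \<ge> 0"
    using \<delta>(1) norm_ge_zero order_trans by blast
  have "norm (x - y) = norm (Moebius_function 0 y x) * norm (1 - cnj y * x)"
    using norm_diff_eq_Moebius_function Moebius_function_denom_nonzero x y by blast
  also have "\<dots> \<le> \<delta> * (norm (1 - y) + norm (1 - x))"
    by (rule mult_mono[OF \<delta>(1) den \<open>\<delta> \<ge> 0\<close>]) simp
  finally have "norm (1 - x) \<le> norm (1 - y) + \<delta> * (norm (1 - y) + norm (1 - x))"
    using norm_triangle_ineq4[of "1 - y" "x - y"] by simp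
  then have "(1 - \<delta>) * norm (1 - x) \<le> (1 + \<delta>) * norm (1 - y)"
    by (simp add: algebra_simps)
  then show ?thesis
    using \<delta>(2) by (simp add: divide_simps mult.commute)
qed

lemma norm_1_minus_bounded_holomorphic_le:
  fixes r :: real
  defines "\<delta> \<equiv> tanh_add r (1/2)"
  assumes hol: "h holomorphic_on ball 0 1" and bounded: "\<And>w. norm w < 1 \<Longrightarrow> norm (h w) \<le> 1"
    and r: "0 \<le> r" "r < 1" and z: "norm z \<le> r"
  shows "norm (1 - h z) \<le> (1 + \<delta>) / (1 - \<delta>) * norm (1 - h (1/2))"
proof -
  have \<delta>: "0 \<le> \<delta>" "\<delta> < 1"
    using tanh_add_nonneg tanh_add_less_1 r by (auto simp: \<delta>_def)
  have z1: "norm z < 1" and half: "norm (1/2 :: complex) < 1"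
    using z r by auto
  show ?thesis
  proof (cases "\<exists>w. norm w < 1 \<and> norm (h w) = 1")
    case True
    then obtain w where w: "norm w < 1" "norm (h w) = 1"
      by blast
    have "h constant_on ball 0 1"
    proof (rule Schwarz2[OF hol])
      show "ball w (1 - norm w) \<subseteq> ball 0 1"
        by (simp add: ball_subset_ball_iff)
      show "norm (h v) \<le> norm (h w)" if "norm (w - v) < 1 - norm w" for v
        using bounded[of v] w norm_triangle_ineq4[of w "w - v"] that by simp
    qed (use w in simp)
    then have "h z = h (1/2)"
      using z1 half by (auto simp: constant_on_def)
    moreover have "1 \<le> (1 + \<delta>) / (1 - \<delta>)"
      using \<delta> by simp
    ultimately show ?thesis
      using mult_right_mono[of 1 "(1 + \<delta>) / (1 - \<delta>)" "norm (1 - h (1/2))"] by simp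
  next
    case False
    then have self: "h ` ball 0 1 \<subseteq> ball 0 1"
      using bounded by (force simp: le_less)
    have "norm (Moebius_function 0 (h (1/2)) (h z)) \<le> norm (Moebius_function 0 (1/2) z)"
      by (rule Schwarz_Pick[OF hol self z1 half])
    also have "\<dots> \<le> tanh_add (norm z) (1/2)"
      using norm_Moebius_function_le[OF half z1] by simp
    also have "\<dots> \<le> \<delta>"
      unfolding \<delta>_def by (rule tanh_add_mono) (use z in auto)
    finally show ?thesis
      by (rule norm_1_minus_le_if_Moebius_le[OF norm_self_map_less_1[OF self z1]
            norm_self_map_less_1[OF self half] _ \<delta>(2)])
  qed
qed

lemma self_map_fixing_0_near_identity:
  fixes r :: real
  defines "K \<equiv> (1 + tanh_add r (1/2)) / (1 - tanh_add r (1/2))"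
  assumes g: "g holomorphic_on ball 0 1" "g ` ball 0 1 \<subseteq> ball 0 1" "g 0 = 0"
    and r: "0 \<le> r" "r < 1" and z: "norm z \<le> r"
  shows "norm (g z - z) \<le> 2 * K * norm (g (1/2) - 1/2)"
proof -
  have z1: "norm z < 1" and half: "norm (1/2 :: complex) < 1"
    using z r by auto
  obtain h where hol: "h holomorphic_on ball 0 1" and gh: "\<And>w. norm w < 1 \<Longrightarrow> g w = w * h w"
    and dh: "deriv g 0 = h 0"
    using Schwarz3[OF g(1,3)] by blast
  have "norm (h w) \<le> 1" if w: "norm w < 1" for w
  proof (cases "w = 0")
    case True
    then show ?thesis
      using Schwarz_Lemma(2)[OF g(1,3) norm_self_map_less_1[OF g(2)] w] dh by simp
  next
    case False
    then show ?thesis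
      using Schwarz_Lemma(1)[OF g(1,3) norm_self_map_less_1[OF g(2)] w] gh[OF w]
      by (simp add: norm_mult)
  qed
  then have "norm (1 - h z) \<le> K * norm (1 - h (1/2))"
    unfolding K_def using norm_1_minus_bounded_holomorphic_le[OF hol _ r z] by blast
  moreover have "norm (g z - z) \<le> norm (1 - h z)"
  proof -
    have "g z - z = - (z * (1 - h z))"
      using gh[OF z1] by (simp add: algebra_simps)
    then show ?thesis
      using z1 mult_right_mono[of "norm z" 1 "norm (1 - h z)"] by (simp add: norm_mult)
  qed
  moreover have "g (1/2) - 1/2 = - (1/2) * (1 - h (1/2))"
    using gh[OF half] by (simp add: algebra_simps)
  then have "norm (1 - h (1/2)) = 2 * norm (g (1/2) - 1/2)"
    by (simp add: norm_mult)
  ultimately show ?thesis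
    by simp
qed

lemma self_map_near_identity:
  fixes r :: real
  assumes r: "0 \<le> r" "r < 1"
  obtains C where "C \<ge> 0"
    "\<And>g z. g holomorphic_on ball 0 1 \<Longrightarrow> g ` ball 0 1 \<subseteq> ball 0 1 \<Longrightarrow> norm z \<le> r \<Longrightarrow>
       norm (g z - z) \<le> C * (norm (g 0) + norm (g (1/2) - 1/2))"
proof
  define K where "K = (1 + tanh_add r (1/2)) / (1 - tanh_add r (1/2))"
  have "K \<ge> 1"
    using tanh_add_nonneg[OF r(1)] tanh_add_less_1[OF r] by (simp add: K_def)
  then show "4 + 8 * K \<ge> 0"
    by simp
  fix g and z :: complex
  assume g: "g holomorphic_on ball 0 1" "g ` ball 0 1 \<subseteq> ball 0 1" and z: "norm z \<le> r"
  define c where "c = g 0"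
  define e where "e = norm (g (1/2) - 1/2)"
  have z1: "norm z < 1" and half: "norm (1/2 :: complex) < 1"
    using z r by auto
  have "norm (g z - z) \<le> 4 * norm c + 8 * K * norm c + 2 * K * e"
  proof (cases "norm c \<le> 1/2")
    case False
    have "norm (g z - z) \<le> norm (g z) + norm z"
      by (rule norm_triangle_ineq4)
    also have "\<dots> \<le> 4 * norm c"
      using norm_self_map_less_1[OF g(2) z1] z1 False by simp
    moreover have "0 \<le> 8 * K * norm c + 2 * K * e"
      using \<open>K \<ge> 1\<close> by (simp add: e_def)
    ultimately show ?thesis
      by linarith
  next
    case True
    then have c: "norm c < 1"
      by simp
    define \<psi> where "\<psi> w = Moebius_function 0 c (g w)" for w
    have \<psi>: "\<psi> holomorphic_on ball 0 1" "\<psi> ` ball 0 1 \<subseteq> ball 0 1"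
      using holomorphic_self_map_compose[OF g Moebius_function_holomorphic[OF c]
          Moebius_function_self_map[OF c]] by (simp_all add: \<psi>_def[abs_def])
    have "\<psi> 0 = 0"
      by (simp add: \<psi>_def c_def Moebius_function_simple)
    have "norm (\<psi> (1/2) - 1/2) \<le> norm (\<psi> (1/2) - g (1/2)) + e"
      using norm_triangle_ineq[of "\<psi> (1/2) - g (1/2)" "g (1/2) - 1/2"] by (simp add: e_def)
    also have "\<dots> \<le> 4 * norm c + e"
      using norm_Moebius_function_minus_id_le[OF True norm_self_map_less_1[OF g(2) half]]
      by (simp add: \<psi>_def)
    finally have \<psi>_half: "norm (\<psi> (1/2) - 1/2) \<le> 4 * norm c + e" .
    have "norm (\<psi> z - z) \<le> 2 * K * norm (\<psi> (1/2) - 1/2)"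
      using self_map_fixing_0_near_identity[OF \<psi> \<open>\<psi> 0 = 0\<close> r z] unfolding K_def .
    also have "\<dots> \<le> 2 * K * (4 * norm c + e)"
      by (rule mult_left_mono[OF \<psi>_half]) (use \<open>K \<ge> 1\<close> in simp)
    also have "\<dots> = 8 * K * norm c + 2 * K * e"
      by (simp add: algebra_simps)
    finally have \<psi>_near: "norm (\<psi> z - z) \<le> 8 * K * norm c + 2 * K * e" .
    have "g z = Moebius_function 0 (-c) (\<psi> z)"
      using Moebius_function_inverse c norm_self_map_less_1[OF g(2) z1] by (simp add: \<psi>_def)
    then have "norm (g z - \<psi> z) \<le> 4 * norm c"
      using norm_Moebius_function_minus_id_le[of "-c" "\<psi> z"] True
        norm_self_map_less_1[OF \<psi>(2) z1] by simp
    moreover have "norm (g z - z) \<le> norm (g z - \<psi> z) + norm (\<psi> z - z)"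
      using norm_triangle_ineq[of "g z - \<psi> z" "\<psi> z - z"] by simp
    ultimately show ?thesis
      using \<psi>_near by linarith
  qed
  also have "\<dots> \<le> (4 + 8 * K) * (norm c + e)"
    using \<open>K \<ge> 1\<close> by (simp add: distrib_right distrib_left e_def)
  finally show "norm (g z - z) \<le> (4 + 8 * K) * (norm (g 0) + norm (g (1/2) - 1/2))"
    by (simp add: c_def e_def)
qed

lemma powr_add_le_two_powr:
  fixes a b p :: real
  assumes "0 \<le> a" "0 \<le> b" "0 \<le> p"
  shows "(a + b) powr p \<le> 2 powr p * (a powr p + b powr p)"
proof -
  have "(a + b) powr p \<le> (2 * max a b) powr p"
    using assms by (intro powr_mono2) auto
  also have "\<dots> = 2 powr p * max a b powr p"
    using assms by (simp add: powr_mult)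
  also have "max a b powr p \<le> a powr p + b powr p"
    by (cases "a \<le> b") (auto simp: max_def)
  finally show ?thesis
    by simp
qed

lemma Lp_on_imp_integrable:
  assumes "Lp_on d T k" "1 \<le> d"
  shows "integrable (lebesgue_on {0..T}) k"
proof -
  have meas: "k \<in> borel_measurable (lebesgue_on {0..T})"
    using assms(1) by (simp add: Lp_on_def)
  show ?thesis
  proof (cases "d = \<infinity>")
    case True
    then obtain C where C: "AE x in lebesgue_on {0..T}. \<bar>k x\<bar> \<le> C"
      using assms(1) by (auto simp: Lp_on_def)
    show ?thesis
    proof (rule Bochner_Integration.integrable_bound[OF _ meas])
      show "AE x in lebesgue_on {0..T}. norm (k x) \<le> norm C"
        using C by eventually_elim auto
    qed simp
  next
    case False
    define p where "p = real_of_ereal d"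
    have "p \<ge> 1"
      using assms(2) False unfolding p_def by (cases d) auto
    have "\<bar>k x\<bar> \<le> 1 + \<bar>k x\<bar> powr p" for x
    proof (cases "\<bar>k x\<bar> \<le> 1")
      case True
      then show ?thesis
        using powr_ge_zero[of "\<bar>k x\<bar>" p] by linarith
    next
      case False
      then have "\<bar>k x\<bar> powr 1 \<le> \<bar>k x\<bar> powr p"
        using \<open>p \<ge> 1\<close> by (intro powr_mono) auto
      then show ?thesis
        using False by simp
    qed
    then have bound: "norm (k x) \<le> norm (1 + \<bar>k x\<bar> powr p)" for x
      by (simp add: add_increasing2 order_trans[OF _ abs_ge_self])
    have "integrable (lebesgue_on {0..T}) (\<lambda>x. \<bar>k x\<bar> powr p)"
      using assms(1) False by (simp add: Lp_on_def p_def)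
    then show ?thesis
      by (intro Bochner_Integration.integrable_bound[where f="\<lambda>x. 1 + \<bar>k x\<bar> powr p", OF _ meas]
          AE_I2 bound) simp
  qed
qed

lemma Lp_on_imp_integrable_on:
  "Lp_on d T k \<Longrightarrow> 1 \<le> d \<Longrightarrow> k integrable_on {0..T}"
  using integrable_on_lebesgue_on[OF Lp_on_imp_integrable] by simp

lemma Lp_on_cmult:
  assumes "Lp_on d T k"
  shows "Lp_on d T (\<lambda>x. c * k x)"
proof -
  have "k \<in> borel_measurable (lebesgue_on {0..T})"
    using assms by (simp add: Lp_on_def)
  then have meas: "(\<lambda>x. c * k x) \<in> borel_measurable (lebesgue_on {0..T})"
    by measurable
  show ?thesis
  proof (cases "d = \<infinity>")
    case True
    then obtain C where "AE x in lebesgue_on {0..T}. \<bar>k x\<bar> \<le> C"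
      using assms by (auto simp: Lp_on_def)
    then have "AE x in lebesgue_on {0..T}. \<bar>c * k x\<bar> \<le> \<bar>c\<bar> * C"
      by eventually_elim (simp add: abs_mult mult_left_mono)
    then show ?thesis
      using meas True by (auto simp: Lp_on_def)
  next
    case False
    have "integrable (lebesgue_on {0..T}) (\<lambda>x. \<bar>c\<bar> powr real_of_ereal d * \<bar>k x\<bar> powr real_of_ereal d)"
      using assms False by (simp add: Lp_on_def)
    then show ?thesis
      using meas False by (simp add: Lp_on_def abs_mult powr_mult)
  qed
qed

lemma Lp_on_add:
  assumes k1: "Lp_on d T k1" and k2: "Lp_on d T k2" and d: "1 \<le> d"
  shows "Lp_on d T (\<lambda>x. k1 x + k2 x)"
proof -
  have "k1 \<in> borel_measurable (lebesgue_on {0..T})" "k2 \<in> borel_measurable (lebesgue_on {0..T})"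
    using k1 k2 by (simp_all add: Lp_on_def)
  then have meas: "(\<lambda>x. k1 x + k2 x) \<in> borel_measurable (lebesgue_on {0..T})"
    by measurable
  show ?thesis
  proof (cases "d = \<infinity>")
    case True
    obtain C1 C2 where "AE x in lebesgue_on {0..T}. \<bar>k1 x\<bar> \<le> C1"
      and "AE x in lebesgue_on {0..T}. \<bar>k2 x\<bar> \<le> C2"
      using k1 k2 True by (auto simp: Lp_on_def)
    then have "AE x in lebesgue_on {0..T}. \<bar>k1 x + k2 x\<bar> \<le> C1 + C2"
      by eventually_elim simp
    then show ?thesis
      using meas True by (auto simp: Lp_on_def)
  next
    case False
    define p where "p = real_of_ereal d"
    have "p \<ge> 0"
      using d False unfolding p_def by (cases d) auto
    have "\<bar>k1 x + k2 x\<bar> powr p \<le> 2 powr p * (\<bar>k1 x\<bar> powr p + \<bar>k2 x\<bar> powr p)" for x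
      using powr_mono2[OF \<open>p \<ge> 0\<close> abs_ge_zero abs_triangle_ineq]
        powr_add_le_two_powr[OF abs_ge_zero abs_ge_zero \<open>p \<ge> 0\<close>] by (rule order_trans)
    then have bound: "norm (\<bar>k1 x + k2 x\<bar> powr p)
        \<le> norm (2 powr p * (\<bar>k1 x\<bar> powr p + \<bar>k2 x\<bar> powr p))" for x
      by (simp add: order_trans[OF _ abs_ge_self])
    have "integrable (lebesgue_on {0..T}) (\<lambda>x. 2 powr p * (\<bar>k1 x\<bar> powr p + \<bar>k2 x\<bar> powr p))"
      using k1 k2 False by (simp add: Lp_on_def p_def)
    moreover have "(\<lambda>x. \<bar>k1 x + k2 x\<bar> powr p) \<in> borel_measurable (lebesgue_on {0..T})"
      using meas by measurable
    ultimately have "integrable (lebesgue_on {0..T}) (\<lambda>x. \<bar>k1 x + k2 x\<bar> powr p)"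
      by (rule Bochner_Integration.integrable_bound) (rule AE_I2, rule bound)
    then show ?thesis
      using meas False by (simp add: Lp_on_def p_def)
  qed
qed

lemma integral_le_on_short_intervals:
  fixes k :: "real \<Rightarrow> real"
  assumes k: "k integrable_on {0..T}" and e: "e > 0"
  obtains \<delta> where "\<delta> > 0"
    "\<And>s t. 0 \<le> s \<Longrightarrow> s \<le> t \<Longrightarrow> t \<le> T \<Longrightarrow> t - s \<le> \<delta> \<Longrightarrow> integral {s..t} k \<le> e"
proof -
  define F where "F x = integral {0..x} k" for x
  have "uniformly_continuous_on {0..T} F"
    unfolding F_def by (intro compact_uniformly_continuous indefinite_integral_continuous_1 k) simp
  then obtain \<delta> where \<delta>: "\<delta> > 0"
    "\<And>x x'. x \<in> {0..T} \<Longrightarrow> x' \<in> {0..T} \<Longrightarrow> dist x' x < \<delta> \<Longrightarrow> dist (F x') (F x) < e"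
    using e unfolding uniformly_continuous_on_def by metis
  show ?thesis
  proof (rule that[of "\<delta>/2"])
    fix s t
    assume st: "0 \<le> s" "s \<le> t" "t \<le> T" "t - s \<le> \<delta>/2"
    have "k integrable_on {0..t}"
      by (rule integrable_on_subinterval[OF k]) (use st in auto)
    from Henstock_Kurzweil_Integration.integral_combine[OF st(1,2) this]
    have "integral {s..t} k = F t - F s"
      by (simp add: F_def)
    moreover have "dist (F t) (F s) < e"
      by (rule \<delta>(2)) (use st \<delta> in \<open>auto simp: dist_real_def\<close>)
    ultimately show "integral {s..t} k \<le> e"
      by (simp add: dist_real_def)
  qed (use \<delta> in simp)
qed

lemma holomorphic_lipschitz_on_cball:
  assumes f: "f holomorphic_on ball 0 1" and R: "R < 1"
  obtains L where "L \<ge> 0"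
    "\<And>x y. norm x \<le> R \<Longrightarrow> norm y \<le> R \<Longrightarrow> norm (f x - f y) \<le> L * norm (x - y)"
proof -
  have sub: "cball 0 R \<subseteq> ball (0::complex) 1"
    using R by auto
  have "deriv f holomorphic_on ball 0 1"
    by (rule holomorphic_deriv[OF f]) simp
  then have "continuous_on (cball 0 R) (deriv f)"
    using holomorphic_on_imp_continuous_on holomorphic_on_subset sub by blast
  then have "compact (deriv f ` cball 0 R)"
    by (intro compact_continuous_image) auto
  then obtain B where B: "\<And>z. z \<in> cball 0 R \<Longrightarrow> norm (deriv f z) \<le> B"
    using compact_imp_bounded bounded_iff by (metis imageI)
  show ?thesis
  proof (rule that[of "max B 0"])
    fix x y :: complex
    assume xy: "norm x \<le> R" "norm y \<le> R"
    show "norm (f x - f y) \<le> max B 0 * norm (x - y)"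
    proof (rule field_differentiable_bound[where S="cball 0 R"])
      show "(f has_field_derivative deriv f z) (at z within cball 0 R)" if "z \<in> cball 0 R" for z
        by (rule holomorphic_derivI[OF f]) (use that sub in auto)
      show "norm (deriv f z) \<le> max B 0" if "z \<in> cball 0 R" for z
        using B[OF that] by simp
    qed (use xy in auto)
  qed simp
qed

lemma compact_subset_ball_imp_subset_cball:
  fixes K :: "'a::real_normed_vector set"
  assumes "compact K" "K \<subseteq> ball 0 1"
  obtains r where "0 \<le> r" "r < 1" "K \<subseteq> cball 0 r"
proof (cases "K = {}")
  case False
  obtain z where "z \<in> K" "\<And>w. w \<in> K \<Longrightarrow> norm w \<le> norm z"
    using continuous_attains_sup[OF assms(1) False continuous_on_norm_id] by blast
  then show ?thesis
    using assms(2) by (intro that[of "norm z"]) auto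
qed (use that[of 0] in auto)

lemma evolution_family_self_map:
  assumes "evolution_family d \<phi>" "0 \<le> s" "s \<le> t"
  shows "\<phi> s t holomorphic_on ball 0 1" "\<phi> s t ` ball 0 1 \<subseteq> ball 0 1"
  using assms(1)[unfolded evolution_family_def, THEN conjunct1] assms(2,3) by blast+

lemma evolution_family_id:
  "evolution_family d \<phi> \<Longrightarrow> 0 \<le> s \<Longrightarrow> z \<in> ball 0 1 \<Longrightarrow> \<phi> s s z = z"
  unfolding evolution_family_def by (elim conjE) blast

lemma evolution_family_trans:
  "evolution_family d \<phi> \<Longrightarrow> 0 \<le> s \<Longrightarrow> s \<le> u \<Longrightarrow> u \<le> t \<Longrightarrow> z \<in> ball 0 1 \<Longrightarrow>
     \<phi> s t z = \<phi> u t (\<phi> s u z)"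
  unfolding evolution_family_def by (elim conjE) blast

lemma evolution_family_displacement:
  assumes ef: "evolution_family d \<phi>" and z: "z \<in> ball 0 1" and T: "T > 0"
  obtains k where "\<And>x. 0 \<le> k x" "Lp_on d T k"
    "\<And>s t. 0 \<le> s \<Longrightarrow> s \<le> t \<Longrightarrow> t \<le> T \<Longrightarrow> norm (\<phi> s t z - z) \<le> integral {s..t} k"
proof -
  have "\<exists>k. (\<forall>x. 0 \<le> k x) \<and> Lp_on d T k \<and> (\<forall>s u t. 0 \<le> s \<longrightarrow> s \<le> u \<longrightarrow> u \<le> t \<longrightarrow> t \<le> T \<longrightarrow>
      norm (\<phi> s u z - \<phi> s t z) \<le> integral {u..t} k)"
    using ef[unfolded evolution_family_def, THEN conjunct2, THEN conjunct2, THEN conjunct2] z T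
    by blast
  then obtain k where k: "\<And>x. 0 \<le> k x" "Lp_on d T k"
    "\<And>s u t. 0 \<le> s \<Longrightarrow> s \<le> u \<Longrightarrow> u \<le> t \<Longrightarrow> t \<le> T \<Longrightarrow> norm (\<phi> s u z - \<phi> s t z) \<le> integral {u..t} k"
    by blast
  show ?thesis
  proof (rule that[OF k(1,2)])
    fix s t
    assume "0 \<le> s" "s \<le> t" "t \<le> T"
    then show "norm (\<phi> s t z - z) \<le> integral {s..t} k"
      using k(3)[of s s t] evolution_family_id[OF ef _ z] by (simp add: norm_minus_commute)
  qed
qed

lemma tanh_add_half_iterate_bounds:
  assumes "0 \<le> r" "r < 1"
  shows "0 \<le> ((\<lambda>x. tanh_add x (1/2)) ^^ n) r" "((\<lambda>x. tanh_add x (1/2)) ^^ n) r < 1"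
  using assms by (induction n) (auto intro: tanh_add_nonneg tanh_add_less_1)

lemma evolution_family_norm_le_iterate:
  assumes ef: "evolution_family d \<phi>"
    and short: "\<And>u t. 0 \<le> u \<Longrightarrow> u \<le> t \<Longrightarrow> t \<le> T \<Longrightarrow> t - u \<le> \<delta> \<Longrightarrow> norm (\<phi> u t 0) \<le> 1/2"
    and \<delta>: "0 \<le> \<delta>" and r: "0 \<le> r" "r < 1" and z: "norm z \<le> r"
    and st: "0 \<le> s" "s \<le> t" "t \<le> T" "t - s \<le> real n * \<delta>"
  shows "norm (\<phi> s t z) \<le> ((\<lambda>x. tanh_add x (1/2)) ^^ n) r"
  using st
proof (induction n arbitrary: t)
  case 0
  then show ?case
    using evolution_family_id[OF ef] z r by simp
next
  case (Suc n)
  define R where "R = ((\<lambda>x. tanh_add x (1/2)) ^^ n) r"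
  have R: "0 \<le> R" "R < 1"
    using tanh_add_half_iterate_bounds[OF r] by (simp_all add: R_def)
  define u where "u = max s (t - \<delta>)"
  have u: "s \<le> u" "u \<le> t" "t - u \<le> \<delta>" "u - s \<le> real n * \<delta>"
    using Suc.prems \<delta> by (auto simp: u_def algebra_simps)
  define w where "w = \<phi> s u z"
  have "norm w \<le> R"
    using Suc.IH[of u] Suc.prems u by (simp add: w_def R_def)
  have "\<phi> s t z = \<phi> u t w"
    using evolution_family_trans[OF ef \<open>0 \<le> s\<close> u(1,2)] z r by (simp add: w_def)
  have "0 \<le> u" "norm (\<phi> u t 0) \<le> 1/2"
    using short[of u t] Suc.prems u by simp_all
  have "norm (\<phi> u t w) \<le> tanh_add (norm w) (norm (\<phi> u t 0))"
    using norm_self_map_le[OF evolution_family_self_map[OF ef \<open>0 \<le> u\<close> u(2)]] \<open>norm w \<le> R\<close> R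
    by simp
  also have "\<dots> \<le> tanh_add R (norm (\<phi> u t 0))"
    using \<open>norm w \<le> R\<close> \<open>norm (\<phi> u t 0) \<le> 1/2\<close> by (intro tanh_add_mono) simp_all
  also have "\<dots> = tanh_add (norm (\<phi> u t 0)) R"
    by (rule tanh_add_commute)
  also have "\<dots> \<le> tanh_add (1/2) R"
    using \<open>norm (\<phi> u t 0) \<le> 1/2\<close> R by (intro tanh_add_mono) simp_all
  also have "\<dots> = tanh_add R (1/2)"
    by (rule tanh_add_commute)
  finally have "norm (\<phi> s t z) \<le> tanh_add R (1/2)"
    using \<open>\<phi> s t z = \<phi> u t w\<close> by simp
  then show ?case
    by (simp add: R_def)
qed

lemma evolution_family_uniform_radius:
  assumes ef: "evolution_family d \<phi>" and d: "1 \<le> d" and T: "T > 0" and r: "0 \<le> r" "r < 1"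
  obtains R where "R < 1"
    "\<And>s t z. 0 \<le> s \<Longrightarrow> s \<le> t \<Longrightarrow> t \<le> T \<Longrightarrow> norm z \<le> r \<Longrightarrow> norm (\<phi> s t z) \<le> R"
proof -
  have "(0::complex) \<in> ball 0 1"
    by simp
  from ef this T obtain k where "\<And>x. 0 \<le> k x" and k: "Lp_on d T k"
    and displacement: "\<And>s t. 0 \<le> s \<Longrightarrow> s \<le> t \<Longrightarrow> t \<le> T \<Longrightarrow> norm (\<phi> s t 0 - 0) \<le> integral {s..t} k"
    by (rule evolution_family_displacement) blast
  obtain \<delta> where \<delta>: "\<delta> > 0"
    and small: "\<And>s t. 0 \<le> s \<Longrightarrow> s \<le> t \<Longrightarrow> t \<le> T \<Longrightarrow> t - s \<le> \<delta> \<Longrightarrow> integral {s..t} k \<le> 1/2"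
    using integral_le_on_short_intervals[OF Lp_on_imp_integrable_on[OF k d], of "1/2"] by auto
  define N where "N = nat \<lceil>T / \<delta>\<rceil>"
  have "T / \<delta> \<le> real N"
    unfolding N_def by linarith
  then have "T \<le> real N * \<delta>"
    using \<delta> by (simp add: divide_le_eq)
  show ?thesis
  proof (rule that)
    show "((\<lambda>x. tanh_add x (1/2)) ^^ N) r < 1"
      using tanh_add_half_iterate_bounds[OF r] by blast
    fix s t and z :: complex
    assume st: "0 \<le> s" "s \<le> t" "t \<le> T" and z: "norm z \<le> r"
    have short: "norm (\<phi> u v 0) \<le> 1/2" if "0 \<le> u" "u \<le> v" "v \<le> T" "v - u \<le> \<delta>" for u v
      using displacement[OF that(1-3)] small[OF that] by simp
    have "t - s \<le> real N * \<delta>"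
      using st \<open>T \<le> real N * \<delta>\<close> by simp
    with \<delta> show "norm (\<phi> s t z) \<le> ((\<lambda>x. tanh_add x (1/2)) ^^ N) r"
      by (intro evolution_family_norm_le_iterate[OF ef short _ r z st]) simp_all
  qed
qed

lemma evolution_family_near_identity:
  assumes ef: "evolution_family d \<phi>" and d: "1 \<le> d" and T: "T > 0" and r: "0 \<le> r" "r < 1"
  obtains k where "\<And>x. 0 \<le> k x" "Lp_on d T k"
    "\<And>s t z. 0 \<le> s \<Longrightarrow> s \<le> t \<Longrightarrow> t \<le> T \<Longrightarrow> norm z \<le> r \<Longrightarrow>
       norm (\<phi> s t z - z) \<le> integral {s..t} k"
proof -
  obtain C where "C \<ge> 0" and C: "\<And>g z. g holomorphic_on ball 0 1 \<Longrightarrow> g ` ball 0 1 \<subseteq> ball 0 1 \<Longrightarrow>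
      norm z \<le> r \<Longrightarrow> norm (g z - z) \<le> C * (norm (g 0) + norm (g (1/2) - 1/2))"
    using self_map_near_identity[OF r] by blast
  have "(0::complex) \<in> ball 0 1" "(1/2::complex) \<in> ball 0 1"
    by simp_all
  from ef this(1) T obtain k0 where k0: "\<And>x. 0 \<le> k0 x" "Lp_on d T k0"
    "\<And>s t. 0 \<le> s \<Longrightarrow> s \<le> t \<Longrightarrow> t \<le> T \<Longrightarrow> norm (\<phi> s t 0 - 0) \<le> integral {s..t} k0"
    by (rule evolution_family_displacement) blast
  from ef \<open>1/2 \<in> ball 0 1\<close> T obtain k1 where k1: "\<And>x. 0 \<le> k1 x" "Lp_on d T k1"
    "\<And>s t. 0 \<le> s \<Longrightarrow> s \<le> t \<Longrightarrow> t \<le> T \<Longrightarrow> norm (\<phi> s t (1/2) - 1/2) \<le> integral {s..t} k1"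
    by (rule evolution_family_displacement) blast
  show ?thesis
  proof (rule that)
    show "0 \<le> C * (k0 x + k1 x)" for x
      using \<open>C \<ge> 0\<close> k0(1) k1(1) by simp
    show "Lp_on d T (\<lambda>x. C * (k0 x + k1 x))"
      by (intro Lp_on_cmult Lp_on_add k0(2) k1(2) d)
    fix s t and z :: complex
    assume st: "0 \<le> s" "s \<le> t" "t \<le> T" and z: "norm z \<le> r"
    have "k0 integrable_on {s..t}" "k1 integrable_on {s..t}"
      using Lp_on_imp_integrable_on[OF k0(2) d] Lp_on_imp_integrable_on[OF k1(2) d] st
      by (auto intro: integrable_on_subinterval)
    then have "integral {s..t} (\<lambda>x. C * (k0 x + k1 x)) = C * (integral {s..t} k0 + integral {s..t} k1)"
      by (simp add: integral_add)
    moreover have "norm (\<phi> s t z - z) \<le> C * (norm (\<phi> s t 0) + norm (\<phi> s t (1/2) - 1/2))"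
      by (rule C[OF evolution_family_self_map[OF ef st(1,2)] z])
    moreover have "norm (\<phi> s t 0) + norm (\<phi> s t (1/2) - 1/2) \<le> integral {s..t} k0 + integral {s..t} k1"
      using k0(3)[OF st] k1(3)[OF st] by simp
    ultimately show "norm (\<phi> s t z - z) \<le> integral {s..t} (\<lambda>x. C * (k0 x + k1 x))"
      using mult_left_mono[OF _ \<open>C \<ge> 0\<close>] by (metis order_trans)
  qed
qed

lemma evolution_family_associated_uniformly_lipschitz:
  assumes ef: "evolution_family d \<phi>" and d: "1 \<le> d" and T: "T > 0"
    and hol: "f T holomorphic_on ball 0 1"
    and assoc: "\<And>s t z. 0 \<le> s \<Longrightarrow> s \<le> t \<Longrightarrow> z \<in> ball 0 1 \<Longrightarrow> f t (\<phi> s t z) = f s z"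
    and \<rho>: "0 \<le> \<rho>" "\<rho> < 1"
  obtains L where "L \<ge> 0"
    "\<And>t x y. 0 \<le> t \<Longrightarrow> t \<le> T \<Longrightarrow> norm x \<le> \<rho> \<Longrightarrow> norm y \<le> \<rho> \<Longrightarrow>
       norm (f t x - f t y) \<le> L * norm (x - y)"
proof -
  obtain R where "R < 1"
    and R: "\<And>t z. 0 \<le> t \<Longrightarrow> t \<le> T \<Longrightarrow> norm z \<le> \<rho> \<Longrightarrow> norm (\<phi> t T z) \<le> R"
    using evolution_family_uniform_radius[OF ef d T \<rho>] by (metis order_refl)
  obtain L where "L \<ge> 0"
    and L: "\<And>x y. norm x \<le> R \<Longrightarrow> norm y \<le> R \<Longrightarrow> norm (f T x - f T y) \<le> L * norm (x - y)"
    using holomorphic_lipschitz_on_cball[OF hol \<open>R < 1\<close>] by blast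
  show ?thesis
  proof (rule that)
    show "0 \<le> L * (2 / (1 - \<rho>))"
      using \<open>L \<ge> 0\<close> \<rho> by simp
    fix t and x y :: complex
    assume t: "0 \<le> t" "t \<le> T" and xy: "norm x \<le> \<rho>" "norm y \<le> \<rho>"
    then have "f t x = f T (\<phi> t T x)" "f t y = f T (\<phi> t T y)"
      using assoc \<rho> by auto
    then have "norm (f t x - f t y) \<le> L * norm (\<phi> t T x - \<phi> t T y)"
      using L R t xy by simp
    also have "\<dots> \<le> L * (2 / (1 - \<rho>) * norm (x - y))"
      using self_map_lipschitz_on_cball[OF evolution_family_self_map[OF ef t] xy \<rho>(2)] \<open>L \<ge> 0\<close>
      by (rule mult_left_mono)
    finally show "norm (f t x - f t y) \<le> L * (2 / (1 - \<rho>)) * norm (x - y)"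
      by (simp add: mult.assoc)
  qed
qed

lemma evolution_family_associated_kernel:
  assumes ef: "evolution_family d \<phi>" and d: "1 \<le> d" and T: "T > 0"
    and hol: "f T holomorphic_on ball 0 1"
    and assoc: "\<And>s t z. 0 \<le> s \<Longrightarrow> s \<le> t \<Longrightarrow> z \<in> ball 0 1 \<Longrightarrow> f t (\<phi> s t z) = f s z"
    and K: "compact K" "K \<subseteq> ball 0 1"
  obtains k where "\<And>x. 0 \<le> k x" "Lp_on d T k"
    "\<And>z s t. z \<in> K \<Longrightarrow> 0 \<le> s \<Longrightarrow> s \<le> t \<Longrightarrow> t \<le> T \<Longrightarrow> norm (f s z - f t z) \<le> integral {s..t} k"
proof -
  obtain r where r: "0 \<le> r" "r < 1" and "K \<subseteq> cball 0 r"
    using compact_subset_ball_imp_subset_cball[OF K] by blast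
  obtain R where "R < 1"
    and R: "\<And>s t z. 0 \<le> s \<Longrightarrow> s \<le> t \<Longrightarrow> t \<le> T \<Longrightarrow> norm z \<le> r \<Longrightarrow> norm (\<phi> s t z) \<le> R"
    using evolution_family_uniform_radius[OF ef d T r] by blast
  define \<rho> where "\<rho> = max r R"
  have \<rho>: "0 \<le> \<rho>" "\<rho> < 1"
    using r \<open>R < 1\<close> by (auto simp: \<rho>_def)
  obtain L where "L \<ge> 0" and L: "\<And>t x y. 0 \<le> t \<Longrightarrow> t \<le> T \<Longrightarrow> norm x \<le> \<rho> \<Longrightarrow> norm y \<le> \<rho> \<Longrightarrow>
      norm (f t x - f t y) \<le> L * norm (x - y)"
    using evolution_family_associated_uniformly_lipschitz[OF ef d T hol assoc \<rho>] by blast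
  obtain k where k: "\<And>x. 0 \<le> k x" "Lp_on d T k"
    and near: "\<And>s t z. 0 \<le> s \<Longrightarrow> s \<le> t \<Longrightarrow> t \<le> T \<Longrightarrow> norm z \<le> r \<Longrightarrow>
       norm (\<phi> s t z - z) \<le> integral {s..t} k"
    using evolution_family_near_identity[OF ef d T r] by blast
  show ?thesis
  proof (rule that)
    show "0 \<le> L * k x" for x
      using \<open>L \<ge> 0\<close> k(1) by simp
    show "Lp_on d T (\<lambda>x. L * k x)"
      by (rule Lp_on_cmult[OF k(2)])
    fix z s t
    assume "z \<in> K" "0 \<le> s" "s \<le> t" "t \<le> T"
    then have z: "norm z \<le> r" "z \<in> ball 0 1"
      using \<open>K \<subseteq> cball 0 r\<close> K(2) by auto
    have "f s z = f t (\<phi> s t z)"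
      using assoc \<open>0 \<le> s\<close> \<open>s \<le> t\<close> z by simp
    also have "norm (\<dots> - f t z) \<le> L * norm (\<phi> s t z - z)"
      using L[of t "\<phi> s t z" z] R[of s t z] \<open>0 \<le> s\<close> \<open>s \<le> t\<close> \<open>t \<le> T\<close> z
      by (simp add: \<rho>_def)
    finally have "norm (f s z - f t z) \<le> L * integral {s..t} k"
      using near[OF \<open>0 \<le> s\<close> \<open>s \<le> t\<close> \<open>t \<le> T\<close> z(1)] \<open>L \<ge> 0\<close> by (metis mult_left_mono order_trans)
    then show "norm (f s z - f t z) \<le> integral {s..t} (\<lambda>x. L * k x)"
      by simp
  qed
qed

theorem lemma3p2:
  fixes d :: ereal
    and \<phi> :: "real \<Rightarrow> real \<Rightarrow> complex \<Rightarrow> complex"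
    and f :: "real \<Rightarrow> complex \<Rightarrow> complex"
  assumes "1 \<le> d"
    and "evolution_family d \<phi>"
    and "\<And>t. 0 \<le> t \<Longrightarrow> f t holomorphic_on ball 0 1 \<and> inj_on (f t) (ball 0 1)"
    and "\<And>s t z. 0 \<le> s \<Longrightarrow> s \<le> t \<Longrightarrow> z \<in> ball 0 1 \<Longrightarrow> f t (\<phi> s t z) = f s z"
  shows "loewner_chain d f"
  unfolding loewner_chain_def
proof (intro conjI allI impI)
  show "f t holomorphic_on ball 0 1" "inj_on (f t) (ball 0 1)" if "0 \<le> t" for t
    using assms(3) that by blast+
  show "f s ` ball 0 1 \<subseteq> f t ` ball 0 1" if "0 \<le> s" "s < t" for s t
    using assms(4)[of s t] evolution_family_self_map(2)[OF assms(2), of s t] that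
    by (force simp: image_subset_iff)
  fix K :: "complex set" and T :: real
  assume K: "compact K" "K \<subseteq> ball 0 1" and "T > 0"
  then have hol: "f T holomorphic_on ball 0 1"
    using assms(3) by simp
  show "\<exists>k. (\<forall>x. 0 \<le> k x) \<and> Lp_on d T k \<and>
      (\<forall>z\<in>K. \<forall>s t. 0 \<le> s \<longrightarrow> s \<le> t \<longrightarrow> t \<le> T \<longrightarrow> norm (f s z - f t z) \<le> integral {s..t} k)"
  proof (rule evolution_family_associated_kernel[where f=f, OF assms(2,1) \<open>T > 0\<close> hol _ K])
    show "f t (\<phi> s t z) = f s z" if "0 \<le> s" "s \<le> t" "z \<in> ball 0 1" for s t z
      using assms(4) that .
  qed blast
qed

end
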